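(* Let $\varphi:\mathbb{N}\to[1,\infty)$ be a function. Suppose the random walk on $X$ induced by $\mu$ admits a Lyapunov function $V$ with contraction factor $\alpha<1$ (i.e. $\pi(\mu)V\le\alpha V+\beta$ for some $\beta\ge0$), and set $K_n=V^{-1}([0,\varphi(n)])$. (i) If $\lambda(\varphi)<\log(\alpha^{-1})$, then the random walk is $(K_n)_n$-uniformly recurrent; moreover $n_0$ in that definition can be chosen independently of $\epsilon$. (ii) If $\varphi$ has sub-exponential growth, then the random walk is $(K_n)_n$-uniformly recurrent on average.
   Context: Standing assumptions: $G$ is a locally compact $\sigma$-compact metrizable group acting ergodically on a locally compact $\sigma$-compact metrizable space $X$ with a $G$-invariant probability measure $m_X$; $\mu$ is a Borel probability measure on $G$; $\pi(\mu)F(x)=\int_G F(gx)\,d\mu(g)$ for nonnegative measurable $F$; $\mu^{*n}*\delta_x$ is the push-forward of $\mu^{\otimes n}\otimes\delta_x$ under $(g_n,\dots,g_1,x)\mapsto g_n\cdots g_1x$. A Lyapunov function is a proper continuous $V:X\to[0,\infty)$ with constants $\alpha<1$, $\beta\ge0$ such that $\pi(\mu)V\le\alpha V+\beta$ pointwise. For subsets $K_n\subset X$, the random walk is $(K_n)_n$-uniformly recurrent if for every $\epsilon>0$ there are $n_0\in\mathbb{N}$ and a compact $M\subset X$ with $\mu^{*n}*\delta_x(M)\ge1-\epsilon$ for all $n\ge n_0$ and $x\in K_n$; it is $(K_n)_n$-uniformly recurrent on average if the same holds with $\frac1n\sum_{k=0}^{n-1}\mu^{*k}*\delta_x$ in place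 of $\mu^{*n}*\delta_x$. The Lyapunov exponent of $\varphi$ is $\lambda(\varphi)=\limsup_{n\to\infty}\frac1n\log\varphi(n)$; $\varphi$ has sub-exponential growth if $\lambda(\varphi)=0$. *)

theory Defs
  imports "HOL-Analysis.Analysis" "HOL-Probability.Probability"
begin

definition sigma_compact_type :: "'a::topological_space itself \<Rightarrow> bool" where
  "sigma_compact_type _ \<longleftrightarrow> (\<exists>K::nat \<Rightarrow> 'a set. (\<forall>n. compact (K n)) \<and> (\<Union>n. K n) = UNIV)"

definition lcsc_group ::
  "('g::metric_space \<Rightarrow> 'g \<Rightarrow> 'g) \<Rightarrow> 'g \<Rightarrow> ('g \<Rightarrow> 'g) \<Rightarrow> bool" where
  "lcsc_group mul e ginv \<longleftrightarrow>
     (\<forall>a b c. mul (mul a b) c = mul a (mul b c)) \<and>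
     (\<forall>a. mul e a = a \<and> mul a e = a) \<and>
     (\<forall>a. mul (ginv a) a = e \<and> mul a (ginv a) = e) \<and>
     continuous_on UNIV (\<lambda>(a, b). mul a b) \<and> continuous_on UNIV ginv \<and>
     locally_compact_space (euclidean :: 'g topology) \<and> sigma_compact_type TYPE('g)"

definition lcsc_space :: "'x::metric_space itself \<Rightarrow> bool" where
  "lcsc_space _ \<longleftrightarrow> locally_compact_space (euclidean :: 'x topology) \<and> sigma_compact_type TYPE('x)"

definition continuous_action ::
  "('g::metric_space \<Rightarrow> 'g \<Rightarrow> 'g) \<Rightarrow> 'g \<Rightarrow> ('g \<Rightarrow> 'x::metric_space \<Rightarrow> 'x) \<Rightarrow> bool" where
  "continuous_action mul e act \<longleftrightarrow>
     (\<forall>x. act e x = x) \<and> (\<forall>g h x. act (mul g h) x = act g (act h x)) \<and>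
     continuous_on UNIV (\<lambda>(g, x). act g x)"

definition ergodic_invariant_prob ::
  "('g \<Rightarrow> 'x::metric_space \<Rightarrow> 'x) \<Rightarrow> 'x measure \<Rightarrow> bool" where
  "ergodic_invariant_prob act mX \<longleftrightarrow>
     prob_space mX \<and> sets mX = sets borel \<and>
     (\<forall>g. distr mX borel (act g) = mX) \<and>
     (\<forall>A \<in> sets borel. (\<forall>g. act g -` A = A) \<longrightarrow> measure mX A = 0 \<or> measure mX A = 1)"

text \<open>Product g_n ... g_1 of the first n coordinates (omega 0 = g_1, ..., omega (n-1) = g_n).\<close>
primrec gprod :: "('g \<Rightarrow> 'g \<Rightarrow> 'g) \<Rightarrow> 'g \<Rightarrow> (nat \<Rightarrow> 'g) \<Rightarrow> nat \<Rightarrow> 'g" where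
  "gprod mul e \<omega> 0 = e"
| "gprod mul e \<omega> (Suc k) = mul (\<omega> k) (gprod mul e \<omega> k)"

text \<open>mu^{*n} * delta_x: push-forward of mu^{\<otimes>n} \<otimes> delta_x under
(g_n,...,g_1,x) \<mapsto> g_n ... g_1 x.\<close>
definition walk_distr ::
  "('g \<Rightarrow> 'g \<Rightarrow> 'g) \<Rightarrow> 'g \<Rightarrow> ('g \<Rightarrow> 'x::topological_space \<Rightarrow> 'x) \<Rightarrow> 'g measure \<Rightarrow> nat \<Rightarrow> 'x \<Rightarrow> 'x measure" where
  "walk_distr mul e act \<mu> n x =
     distr (PiM {..<n} (\<lambda>_. \<mu>)) borel (\<lambda>\<omega>. act (gprod mul e \<omega> n) x)"

definition proper_fun :: "('x::topological_space \<Rightarrow> real) \<Rightarrow> bool" where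
  "proper_fun V \<longleftrightarrow> (\<forall>K. compact K \<longrightarrow> compact (V -` K))"

definition lyapunov ::
  "('g \<Rightarrow> 'x::topological_space \<Rightarrow> 'x) \<Rightarrow> 'g measure \<Rightarrow> ('x \<Rightarrow> real) \<Rightarrow> real \<Rightarrow> real \<Rightarrow> bool" where
  "lyapunov act \<mu> V \<alpha> \<beta> \<longleftrightarrow>
     proper_fun V \<and> continuous_on UNIV V \<and> (\<forall>x. 0 \<le> V x) \<and> \<alpha> < 1 \<and> 0 \<le> \<beta> \<and>
     (\<forall>x. enn2ereal (\<integral>\<^sup>+ g. ennreal (V (act g x)) \<partial>\<mu>) \<le> ereal (\<alpha> * V x + \<beta>))"

definition unif_recurrent ::
  "('g \<Rightarrow> 'g \<Rightarrow> 'g) \<Rightarrow> 'g \<Rightarrow> ('g \<Rightarrow> 'x::topological_space \<Rightarrow> 'x) \<Rightarrow> 'g measure \<Rightarrow> (nat \<Rightarrow> 'x set) \<Rightarrow> bool" where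
  "unif_recurrent mul e act \<mu> K \<longleftrightarrow>
     (\<forall>\<epsilon>>0. \<exists>n0 M. compact M \<and>
        (\<forall>n\<ge>n0. \<forall>x\<in>K n. measure (walk_distr mul e act \<mu> n x) M \<ge> 1 - \<epsilon>))"

definition unif_recurrent_avg ::
  "('g \<Rightarrow> 'g \<Rightarrow> 'g) \<Rightarrow> 'g \<Rightarrow> ('g \<Rightarrow> 'x::topological_space \<Rightarrow> 'x) \<Rightarrow> 'g measure \<Rightarrow> (nat \<Rightarrow> 'x set) \<Rightarrow> bool" where
  "unif_recurrent_avg mul e act \<mu> K \<longleftrightarrow>
     (\<forall>\<epsilon>>0. \<exists>n0 M. compact M \<and>
        (\<forall>n\<ge>n0. \<forall>x\<in>K n.
           (1 / real n) * (\<Sum>k<n. measure (walk_distr mul e act \<mu> k x) M) \<ge> 1 - \<epsilon>))"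

definition lyap_exp :: "(nat \<Rightarrow> real) \<Rightarrow> ereal" where
  "lyap_exp \<phi> = limsup (\<lambda>n. ereal (ln (\<phi> n) / real n))"

end

theory Submission
  imports Defs
begin

text \<open>Iterating the drift inequality along the walk gives
  \<open>\<pi>(\<mu>)\<^sup>n V \<le> a\<^sup>n V + \<beta>/(1 - a)\<close> for every \<open>a \<in> [max \<alpha> 0, 1)\<close>, so by Markov's inequality
  the mass that \<open>\<mu>\<^sup>*\<^sup>n * \<delta>\<^sub>x\<close> puts outside the compact sublevel set \<open>{V \<le> R}\<close> is at most
  \<open>(a\<^sup>n \<phi>(n) + \<beta>/(1 - a)) / R\<close> for \<open>x \<in> K\<^sub>n\<close>.
  (i) If \<open>\<lambda>(\<phi>) < log \<alpha>\<^sup>-\<^sup>1\<close> then \<open>\<alpha>\<^sup>n \<phi>(n) \<le> 1\<close> for all \<open>n \<ge> n\<^sub>0\<close>, with \<open>n\<^sub>0\<close> independent of the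
  tolerance, and \<open>R\<close> of order \<open>1/\<epsilon>\<close> suffices.
  (ii) For sub-exponential \<open>\<phi>\<close> the bound only becomes small after
  \<open>m\<^sub>n \<approx> log \<phi>(n) / log a\<^sup>-\<^sup>1 = o(n)\<close> steps, so all but a vanishing fraction of the
  times \<open>k < n\<close> contribute almost full mass to the average.\<close>

lemma sigma_compact_type_countable_dense:
  assumes "sigma_compact_type TYPE('a::metric_space)"
  obtains D :: "'a::metric_space set" where "countable D" "\<And>x r. 0 < r \<Longrightarrow> \<exists>p\<in>D. dist p x < r"
proof -
  obtain K :: "nat \<Rightarrow> 'a set" where K: "\<And>n. compact (K n)" "(\<Union>n. K n) = UNIV"
    using assms unfolding sigma_compact_type_def by blast
  have "\<exists>F. F \<subseteq> K n \<and> finite F \<and> K n \<subseteq> (\<Union>p\<in>F. ball p (1 / Suc m))" for n m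
    using compactE_image[OF K(1), of "K n" "\<lambda>p. ball p (1 / Suc m)"] by force
  then obtain F where F: "\<And>n m. finite (F n m) \<and> K n \<subseteq> (\<Union>p\<in>F n m. ball p (1 / Suc m))"
    by metis
  show ?thesis
  proof
    show "countable (\<Union>n m. F n m)"
      using F by (simp add: countable_finite)
    fix x :: 'a and r :: real assume "0 < r"
    obtain n where "x \<in> K n" using K(2) by blast
    moreover obtain m where "1 / real (Suc m) < r" using \<open>0 < r\<close> by (metis nat_approx_posE)
    ultimately show "\<exists>p\<in>\<Union>n m. F n m. dist p x < r"
      using F[of n m] by (force simp: mem_ball)
  qed
qed

lemma dense_ball_between:
  fixes D :: "'a::metric_space set"
  assumes D: "\<And>x r. 0 < r \<Longrightarrow> \<exists>p\<in>D. dist p x < r" and "open A" "x \<in> A"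
  obtains p m where "p \<in> D" "x \<in> ball p (1 / Suc m)" "ball p (1 / Suc m) \<subseteq> A"
proof -
  obtain r where r: "0 < r" "ball x r \<subseteq> A" using assms(2,3) open_contains_ball by blast
  obtain m where m: "1 / real (Suc m) < r / 2"
    using nat_approx_posE[of "r / 2"] r(1) by auto
  obtain p where p: "p \<in> D" "dist p x < 1 / Suc m"
    using D[of "1 / Suc m"] by auto
  have "ball p (1 / Suc m) \<subseteq> ball x r"
  proof
    fix y assume "y \<in> ball p (1 / Suc m)"
    then have "dist x y < r" using p m dist_triangle[of x y p] dist_commute[of x p] by simp
    then show "y \<in> ball x r" by simp
  qed
  moreover have "x \<in> ball p (1 / Suc m)" using p(2) by (simp add: dist_commute)
  ultimately show ?thesis using that p(1) r(2) by blast
qed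

text \<open>The spaces are not assumed second countable as type classes, so that Borel sets of
  a product lie in the product \<open>\<sigma>\<close>-algebra has to be derived from countable dense subsets.\<close>

lemma open_in_sets_pair_borel:
  fixes U :: "('a::metric_space \<times> 'b::metric_space) set" and D1 :: "'a set" and D2 :: "'b set"
  assumes D1: "countable D1" "\<And>x r. 0 < r \<Longrightarrow> \<exists>p\<in>D1. dist p x < r"
    and D2: "countable D2" "\<And>y r. 0 < r \<Longrightarrow> \<exists>q\<in>D2. dist q y < r"
    and "open U"
  shows "U \<in> sets (borel \<Otimes>\<^sub>M borel)"
proof -
  define box :: "'a \<times> nat \<times> 'b \<times> nat \<Rightarrow> ('a \<times> 'b) set"
    where "box = (\<lambda>(p, m, q, k). ball p (1 / Suc m) \<times> ball q (1 / Suc k))"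
  define I where "I = {i \<in> D1 \<times> UNIV \<times> D2 \<times> UNIV. box i \<subseteq> U}"
  have "countable (D1 \<times> (UNIV :: nat set) \<times> D2 \<times> (UNIV :: nat set))"
    using D1(1) D2(1) by simp
  then have "countable I"
    by (rule countable_subset[rotated]) (simp add: I_def)
  moreover have "U = (\<Union>i\<in>I. box i)"
  proof (intro equalityI subsetI)
    fix z assume "z \<in> U"
    obtain A B where AB: "open A" "open B" "z \<in> A \<times> B" "A \<times> B \<subseteq> U"
      using open_prod_elim[OF \<open>open U\<close> \<open>z \<in> U\<close>] by metis
    obtain p m where "p \<in> D1" "fst z \<in> ball p (1 / Suc m)" "ball p (1 / Suc m) \<subseteq> A"
      using dense_ball_between[OF D1(2) AB(1), of "fst z"] AB(3) by (auto simp: mem_Times_iff)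
    moreover obtain q k where "q \<in> D2" "snd z \<in> ball q (1 / Suc k)" "ball q (1 / Suc k) \<subseteq> B"
      using dense_ball_between[OF D2(2) AB(2), of "snd z"] AB(3) by (auto simp: mem_Times_iff)
    ultimately have "(p, m, q, k) \<in> I" "z \<in> box (p, m, q, k)"
      using AB(4) by (auto simp: I_def box_def mem_Times_iff)
    then show "z \<in> (\<Union>i\<in>I. box i)" by blast
  next
    show "z \<in> U" if "z \<in> (\<Union>i\<in>I. box i)" for z
      using that by (auto simp: I_def)
  qed
  ultimately show ?thesis
    by (auto simp: box_def intro!: sets.countable_UN'')
qed

lemma continuous_on_sigma_compact_pair_measurable:
  fixes f :: "'a::metric_space \<times> 'b::metric_space \<Rightarrow> 'c::metric_space"
  assumes "sigma_compact_type TYPE('a)" "sigma_compact_type TYPE('b)" and "continuous_on UNIV f"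
  shows "f \<in> borel_measurable (borel \<Otimes>\<^sub>M borel)"
proof (rule borel_measurableI)
  obtain D1 :: "'a set" where D1: "countable D1" "\<And>x r. 0 < r \<Longrightarrow> \<exists>p\<in>D1. dist p x < r"
    using sigma_compact_type_countable_dense[OF assms(1)] by blast
  obtain D2 :: "'b set" where D2: "countable D2" "\<And>y r. 0 < r \<Longrightarrow> \<exists>q\<in>D2. dist q y < r"
    using sigma_compact_type_countable_dense[OF assms(2)] by blast
  fix S :: "'c set" assume "open S"
  then have "open (f -` S)"
    using assms(3) continuous_on_open_vimage[of UNIV] by auto
  then show "f -` S \<inter> space (borel \<Otimes>\<^sub>M borel) \<in> sets (borel \<Otimes>\<^sub>M borel)"
    using open_in_sets_pair_borel[OF D1 D2] by (simp add: space_pair_measure)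
qed

lemma gprod_fun_upd: "k \<le> n \<Longrightarrow> gprod mul e (w(n := g)) k = gprod mul e w k"
  by (induction k) auto

lemma walk_position_measurable:
  assumes act_meas: "(\<lambda>(g, x). act g x) \<in> borel_measurable (borel \<Otimes>\<^sub>M borel)"
    and act_mul: "\<And>g h x. act (mul g h) x = act g (act h x)"
    and "sets \<mu> = sets borel" and "{..<n} \<subseteq> I"
  shows "(\<lambda>w. act (gprod mul e w n) x) \<in> borel_measurable (PiM I (\<lambda>_. \<mu>))"
  using \<open>{..<n} \<subseteq> I\<close>
proof (induction n)
  case (Suc n)
  have "(\<lambda>w. w n) \<in> measurable (PiM I (\<lambda>_. \<mu>)) \<mu>"
    using Suc.prems by (intro measurable_component_singleton) auto
  then have "(\<lambda>w. w n) \<in> borel_measurable (PiM I (\<lambda>_. \<mu>))"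
    using measurable_cong_sets[OF refl \<open>sets \<mu> = sets borel\<close>] by auto
  moreover have "(\<lambda>w. act (gprod mul e w n) x) \<in> borel_measurable (PiM I (\<lambda>_. \<mu>))"
    using Suc.IH Suc.prems by (simp add: subset_eq)
  ultimately have "(\<lambda>w. (\<lambda>(g, x). act g x) (w n, act (gprod mul e w n) x)) \<in> borel_measurable (PiM I (\<lambda>_. \<mu>))"
    by (intro measurable_compose[OF measurable_Pair act_meas])
  then show ?case by (simp add: act_mul)
qed simp

lemma nn_integral_walk_lyapunov_le:
  assumes act_meas: "(\<lambda>(g, x). act g x) \<in> borel_measurable (borel \<Otimes>\<^sub>M borel)"
    and act_mul: "\<And>g h x. act (mul g h) x = act g (act h x)" and act_e: "\<And>x. act e x = x"
    and \<mu>: "prob_space \<mu>" "sets \<mu> = sets borel"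
    and V: "V \<in> borel_measurable borel" "\<And>x. 0 \<le> V x"
    and drift: "\<And>x. (\<integral>\<^sup>+ g. ennreal (V (act g x)) \<partial>\<mu>) \<le> ennreal (a * V x + \<beta>)"
    and a: "0 \<le> a" "a < 1" and "0 \<le> \<beta>"
  shows "(\<integral>\<^sup>+ w. ennreal (V (act (gprod mul e w n) x)) \<partial>PiM {..<n} (\<lambda>_. \<mu>))
           \<le> ennreal (a ^ n * V x + \<beta> / (1 - a))"
proof (induction n)
  case 0
  interpret prob_space "PiM {} (\<lambda>_::nat. \<mu>)" by (rule prob_space_PiM) (use \<mu> in auto)
  show ?case
    using a \<open>0 \<le> \<beta>\<close> V(2)[of x] by (simp add: act_e emeasure_space_1 ennreal_leI)
next
  case (Suc n)
  define C where "C = \<beta> / (1 - a)"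
  have "0 \<le> C" "a * C + \<beta> = C"
    using a \<open>0 \<le> \<beta>\<close> by (auto simp: C_def field_simps)
  interpret product_sigma_finite "\<lambda>_::nat. \<mu>"
    using prob_space_imp_sigma_finite[OF \<mu>(1)] by (simp add: product_sigma_finite_def)
  interpret P: prob_space "PiM {..<n} (\<lambda>_. \<mu>)" by (rule prob_space_PiM) (use \<mu> in auto)
  define Y where "Y = (\<lambda>w. act (gprod mul e w n) x)"
  note [measurable] = V(1)
  have [measurable]: "Y \<in> borel_measurable (PiM {..<n} (\<lambda>_. \<mu>))"
    unfolding Y_def by (rule walk_position_measurable[OF act_meas act_mul \<mu>(2)]) auto
  have "(\<lambda>w. act (gprod mul e w (Suc n)) x) \<in> borel_measurable (PiM (insert n {..<n}) (\<lambda>_. \<mu>))"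
    by (rule walk_position_measurable[OF act_meas act_mul \<mu>(2)]) auto
  then have f_meas: "(\<lambda>w. ennreal (V (act (gprod mul e w (Suc n)) x)))
      \<in> borel_measurable (PiM (insert n {..<n}) (\<lambda>_. \<mu>))"
    by measurable
  have "(\<integral>\<^sup>+ w. ennreal (V (act (gprod mul e w (Suc n)) x)) \<partial>PiM {..<Suc n} (\<lambda>_. \<mu>))
      = (\<integral>\<^sup>+ w. (\<integral>\<^sup>+ g. ennreal (V (act (gprod mul e (w(n := g)) (Suc n)) x)) \<partial>\<mu>) \<partial>PiM {..<n} (\<lambda>_. \<mu>))"
    unfolding lessThan_Suc by (rule product_nn_integral_insert[OF _ _ f_meas]) auto
  also have "\<dots> = (\<integral>\<^sup>+ w. (\<integral>\<^sup>+ g. ennreal (V (act g (Y w))) \<partial>\<mu>) \<partial>PiM {..<n} (\<lambda>_. \<mu>))"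
    by (simp add: Y_def act_mul gprod_fun_upd)
  also have "\<dots> \<le> (\<integral>\<^sup>+ w. ennreal a * ennreal (V (Y w)) + ennreal \<beta> \<partial>PiM {..<n} (\<lambda>_. \<mu>))"
    using drift a V(2) \<open>0 \<le> \<beta>\<close> by (intro nn_integral_mono) (simp add: ennreal_plus ennreal_mult)
  also have "\<dots> = ennreal a * (\<integral>\<^sup>+ w. ennreal (V (Y w)) \<partial>PiM {..<n} (\<lambda>_. \<mu>)) + ennreal \<beta>"
    by (simp add: nn_integral_add nn_integral_cmult P.emeasure_space_1)
  also have "\<dots> \<le> ennreal a * ennreal (a ^ n * V x + C) + ennreal \<beta>"
    using Suc.IH unfolding Y_def C_def by (intro add_mono mult_left_mono) auto
  also have "\<dots> = ennreal (a * (a ^ n * V x + C) + \<beta>)"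
    using a \<open>0 \<le> C\<close> \<open>0 \<le> \<beta>\<close> V(2)[of x] by (simp add: ennreal_mult ennreal_plus)
  also have "a * (a ^ n * V x + C) + \<beta> = a ^ Suc n * V x + C"
    using \<open>a * C + \<beta> = C\<close> by (simp add: algebra_simps)
  finally show ?case unfolding C_def .
qed

lemma walk_distr_sublevel_escape_le:
  assumes act_meas: "(\<lambda>(g, x). act g x) \<in> borel_measurable (borel \<Otimes>\<^sub>M borel)"
    and act_mul: "\<And>g h x. act (mul g h) x = act g (act h x)" and act_e: "\<And>x. act e x = x"
    and \<mu>: "prob_space \<mu>" "sets \<mu> = sets borel"
    and V: "V \<in> borel_measurable borel" "\<And>x. 0 \<le> V x"
    and drift: "\<And>x. (\<integral>\<^sup>+ g. ennreal (V (act g x)) \<partial>\<mu>) \<le> ennreal (a * V x + \<beta>)"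
    and a: "0 \<le> a" "a < 1" and "0 \<le> \<beta>" and "0 < R"
  shows "1 - measure (walk_distr mul e act \<mu> n x) (V -` {0..R}) \<le> (a ^ n * V x + \<beta> / (1 - a)) / R"
proof -
  define P where "P = PiM {..<n} (\<lambda>_. \<mu>)"
  interpret P: prob_space P unfolding P_def by (rule prob_space_PiM) (use \<mu> in auto)
  define Y where "Y = (\<lambda>w. act (gprod mul e w n) x)"
  define E where "E = a ^ n * V x + \<beta> / (1 - a)"
  note [measurable] = V(1)
  have [measurable]: "Y \<in> borel_measurable P"
    unfolding Y_def P_def by (rule walk_position_measurable[OF act_meas act_mul \<mu>(2)]) auto
  have "0 \<le> E"
    using a \<open>0 \<le> \<beta>\<close> V(2)[of x] by (simp add: E_def)
  define B where "B = {w \<in> space P. R < V (Y w)}"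
  have B: "B \<in> P.events" unfolding B_def by measurable
  have "measure (walk_distr mul e act \<mu> n x) (V -` {0..R}) = P.prob (Y -` V -` {0..R} \<inter> space P)"
    unfolding walk_distr_def P_def[symmetric] Y_def[symmetric]
    using measurable_sets[OF V(1), of "{0..R}"] by (intro measure_distr) auto
  also have "Y -` V -` {0..R} \<inter> space P = space P - B"
    unfolding B_def using V(2) by auto
  finally have escape: "1 - measure (walk_distr mul e act \<mu> n x) (V -` {0..R}) = P.prob B"
    using P.prob_compl[OF B] by simp
  have "ennreal R * emeasure P B = (\<integral>\<^sup>+ w. ennreal R * indicator B w \<partial>P)"
    by (rule nn_integral_cmult_indicator[OF B, symmetric])
  also have "\<dots> \<le> (\<integral>\<^sup>+ w. ennreal (V (Y w)) \<partial>P)"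
    by (rule nn_integral_mono) (auto simp: B_def indicator_def intro: ennreal_leI)
  also have "\<dots> \<le> ennreal E"
    unfolding P_def Y_def E_def by (rule nn_integral_walk_lyapunov_le[OF act_meas act_mul act_e \<mu> V drift a \<open>0 \<le> \<beta>\<close>])
  finally have "R * P.prob B \<le> E"
    using \<open>0 < R\<close> \<open>0 \<le> E\<close> by (simp add: P.emeasure_eq_measure ennreal_mult[symmetric] ennreal_le_iff)
  then show ?thesis
    using \<open>0 < R\<close> by (simp add: escape E_def field_simps mult.commute)
qed

lemma lyap_exp_less_imp_eventually:
  assumes "lyap_exp \<phi> < ereal c"
  obtains N where "\<And>n. N \<le> n \<Longrightarrow> ln (\<phi> n) / real n < c"
proof -
  have "eventually (\<lambda>n. ereal (ln (\<phi> n) / real n) < ereal c) sequentially"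
    using assms unfolding lyap_exp_def by (rule Limsup_lessD)
  then show ?thesis using that unfolding eventually_sequentially by auto
qed

lemma lyap_exp_less_imp_pow_mult_le_one:
  assumes "0 \<le> a" and \<phi>: "\<And>n. 0 < \<phi> n"
    and "lyap_exp \<phi> < (if a \<le> 0 then \<infinity> else ereal (ln (1 / a)))"
  obtains n0 where "\<And>n. n0 \<le> n \<Longrightarrow> a ^ n * \<phi> n \<le> 1"
proof (cases "a = 0")
  case True
  then show ?thesis using that[of 1] by (simp add: power_0_left)
next
  case False
  then have "0 < a" using \<open>0 \<le> a\<close> by simp
  then obtain N where N: "\<And>n. N \<le> n \<Longrightarrow> ln (\<phi> n) / real n < ln (1 / a)"
    using assms(3) lyap_exp_less_imp_eventually by (metis not_le)
  have "a ^ n * \<phi> n \<le> 1" if "max N 1 \<le> n" for n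
  proof -
    have "ln (\<phi> n) < real n * ln (1 / a)"
      using N[of n] that by (simp add: field_simps)
    also have "\<dots> = ln ((1 / a) ^ n)"
      using \<open>0 < a\<close> by (simp add: ln_realpow)
    finally have "\<phi> n < (1 / a) ^ n"
      using \<phi>[of n] \<open>0 < a\<close> by simp
    then show ?thesis
      using \<open>0 < a\<close> by (simp add: power_one_over field_simps)
  qed
  then show ?thesis using that by blast
qed

lemma pow_mult_le_one_index:
  fixes a c :: real
  assumes "0 < a" "a < 1" "1 \<le> c"
  obtains m :: nat where "a ^ m * c \<le> 1" "real m \<le> ln c / ln (1 / a) + 1"
proof
  define L where "L = ln (1 / a)"
  have "0 < L" "ln a = - L"
    using assms by (simp_all add: L_def ln_div)
  define m where "m = nat \<lceil>ln c / L\<rceil>"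
  have "0 \<le> ln c / L" using assms \<open>0 < L\<close> by simp
  then have m: "ln c / L \<le> real m" "real m \<le> ln c / L + 1"
    unfolding m_def by linarith+
  have "ln (a ^ m * c) = ln c - real m * L"
    using assms \<open>ln a = - L\<close> by (simp add: ln_mult ln_realpow)
  also have "\<dots> \<le> 0" using m(1) \<open>0 < L\<close> by (simp add: field_simps)
  finally show "a ^ m * c \<le> 1" using assms by simp
  show "real m \<le> ln c / ln (1 / a) + 1" using m(2) by (simp add: L_def)
qed

lemma average_ge_of_eventually_ge:
  fixes P :: "nat \<Rightarrow> real"
  assumes "\<And>k. k < n \<Longrightarrow> 0 \<le> P k" "\<And>k. m \<le> k \<Longrightarrow> k < n \<Longrightarrow> 1 - D \<le> P k"
    and "0 \<le> D" "0 < n"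
  shows "1 - real m / real n - D \<le> 1 / real n * (\<Sum>k<n. P k)"
proof -
  have "(\<Sum>k<n. 1 - P k) \<le> (\<Sum>k<n. of_bool (k < m) + D)"
    using assms(1-3) by (intro sum_mono) (force simp: not_less)
  also have "\<dots> = real (card ({..<n} \<inter> {..<m})) + real n * D"
    by (simp add: sum.distrib lessThan_def)
  also have "\<dots> \<le> real m + real n * D"
    using card_mono[of "{..<m}" "{..<n} \<inter> {..<m}"] by simp
  finally have "(real n - (\<Sum>k<n. P k)) / real n \<le> (real m + real n * D) / real n"
    by (intro divide_right_mono) (simp_all add: sum_subtractf)
  then show ?thesis
    using \<open>0 < n\<close> by (simp add: diff_divide_distrib add_divide_distrib)
qed

lemma sublevel_mass_ge_uniform:
  fixes \<nu> :: "nat \<Rightarrow> 'x \<Rightarrow> 'x measure" and V :: "'x \<Rightarrow> real"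
  assumes tail: "\<And>n x R. 0 < R \<Longrightarrow> 1 - measure (\<nu> n x) (V -` {0..R}) \<le> (a ^ n * V x + C) / R"
    and "0 \<le> a" "0 \<le> C" and growth: "a ^ n * c \<le> 1" and "V x \<le> c" and "0 < \<epsilon>"
  shows "1 - \<epsilon> \<le> measure (\<nu> n x) (V -` {0..(1 + C) / \<epsilon>})"
proof -
  have "a ^ n * V x \<le> 1"
    using mult_left_mono[OF \<open>V x \<le> c\<close>, of "a ^ n"] growth \<open>0 \<le> a\<close> by simp
  then have "(a ^ n * V x + C) / ((1 + C) / \<epsilon>) \<le> \<epsilon>"
    using \<open>0 \<le> C\<close> \<open>0 < \<epsilon>\<close> by (simp add: field_simps)
  then show ?thesis
    using tail[of "(1 + C) / \<epsilon>" n x] \<open>0 \<le> C\<close> \<open>0 < \<epsilon>\<close> by simp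
qed

lemma sublevel_mass_average_ge:
  fixes \<nu> :: "nat \<Rightarrow> 'x \<Rightarrow> 'x measure" and V :: "'x \<Rightarrow> real"
  assumes tail: "\<And>n x R. 0 < R \<Longrightarrow> 1 - measure (\<nu> n x) (V -` {0..R}) \<le> (a ^ n * V x + C) / R"
    and a: "0 < a" "a < 1" and "0 \<le> C" and V0: "\<And>x. 0 \<le> V x"
    and \<phi>: "\<And>n. 1 \<le> \<phi> n" and "lyap_exp \<phi> = 0" and "0 < \<epsilon>"
  obtains n0 R where "\<And>n x. n0 \<le> n \<Longrightarrow> V x \<le> \<phi> n \<Longrightarrow>
    1 - \<epsilon> \<le> 1 / real n * (\<Sum>k<n. measure (\<nu> k x) (V -` {0..R}))"
proof -
  define L where "L = ln (1 / a)"
  have "0 < L" using a by (simp add: L_def)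
  obtain N where N: "\<And>n. N \<le> n \<Longrightarrow> ln (\<phi> n) / real n < \<epsilon> * L / 3"
    using lyap_exp_less_imp_eventually[of \<phi> "\<epsilon> * L / 3"] \<open>lyap_exp \<phi> = 0\<close> \<open>0 < \<epsilon>\<close> \<open>0 < L\<close>
    by auto
  define R where "R = 3 * (1 + C) / \<epsilon>"
  have "0 < R" using \<open>0 \<le> C\<close> \<open>0 < \<epsilon>\<close> by (simp add: R_def)
  have "1 - \<epsilon> \<le> 1 / real n * (\<Sum>k<n. measure (\<nu> k x) (V -` {0..R}))"
    if n: "max N (nat \<lceil>3 / \<epsilon>\<rceil> + 1) \<le> n" and x: "V x \<le> \<phi> n" for n x
  proof -
    have "3 / \<epsilon> < real n" "0 < n" using n by linarith+
    then have "1 / real n < \<epsilon> / 3"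
      using \<open>0 < \<epsilon>\<close> by (simp add: field_simps)
    obtain m where m: "a ^ m * \<phi> n \<le> 1" "real m \<le> ln (\<phi> n) / L + 1"
      using pow_mult_le_one_index[OF a \<phi>[of n]] unfolding L_def by blast
    have "1 - \<epsilon> / 3 \<le> measure (\<nu> k x) (V -` {0..R})" if "m \<le> k" for k
    proof -
      have "a ^ k * V x \<le> a ^ m * \<phi> n"
        using that a x V0[of x] by (intro mult_mono power_decreasing) auto
      then have "(a ^ k * V x + C) / R \<le> \<epsilon> / 3"
        using m(1) \<open>0 \<le> C\<close> \<open>0 < \<epsilon>\<close> by (simp add: R_def field_simps)
      then show ?thesis using tail[OF \<open>0 < R\<close>, of k x] by linarith
    qed
    then have "1 - real m / real n - \<epsilon> / 3 \<le> 1 / real n * (\<Sum>k<n. measure (\<nu> k x) (V -` {0..R}))"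
      using \<open>0 < \<epsilon>\<close> \<open>0 < n\<close> by (intro average_ge_of_eventually_ge) auto
    moreover have "real m / real n < 2 * \<epsilon> / 3"
    proof -
      have "real m / real n \<le> (ln (\<phi> n) / real n) / L + 1 / real n"
        using m(2) \<open>0 < n\<close> \<open>0 < L\<close> by (simp add: field_simps)
      also have "\<dots> < (\<epsilon> * L / 3) / L + \<epsilon> / 3"
        using N[of n] n \<open>0 < L\<close> \<open>1 / real n < \<epsilon> / 3\<close> by (intro add_less_le_mono divide_strict_right_mono) auto
      finally show ?thesis using \<open>0 < L\<close> by simp
    qed
    ultimately show ?thesis by linarith
  qed
  then show ?thesis using that by blast
qed

lemma lyapunov_constants:
  assumes "lyapunov act \<mu> V \<alpha> \<beta>"
  shows "0 \<le> V x" "\<alpha> < 1" "0 \<le> \<beta>"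
  using assms by (simp_all add: lyapunov_def)

lemma lyapunov_sublevel_compact:
  assumes "lyapunov act \<mu> V \<alpha> \<beta>"
  shows "compact (V -` {0..R})"
  using assms by (simp add: lyapunov_def proper_fun_def)

lemma lyapunov_nn_integral_le:
  assumes "lyapunov act \<mu> V \<alpha> \<beta>" "max \<alpha> 0 \<le> a"
  shows "(\<integral>\<^sup>+ g. ennreal (V (act g x)) \<partial>\<mu>) \<le> ennreal (a * V x + \<beta>)"
proof -
  have "0 \<le> V x" and drift: "enn2ereal (\<integral>\<^sup>+ g. ennreal (V (act g x)) \<partial>\<mu>) \<le> ereal (\<alpha> * V x + \<beta>)"
    using assms(1) unfolding lyapunov_def by auto
  have "(\<integral>\<^sup>+ g. ennreal (V (act g x)) \<partial>\<mu>) \<le> e2ennreal (ereal (\<alpha> * V x + \<beta>))"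
    using e2ennreal_mono[OF drift] by simp
  also have "\<dots> \<le> ennreal (a * V x + \<beta>)"
    using assms(2) \<open>0 \<le> V x\<close> by (auto intro!: ennreal_leI mult_right_mono)
  finally show ?thesis .
qed

lemma lyapunov_walk_escape_le:
  assumes "sigma_compact_type TYPE('g::metric_space)" "sigma_compact_type TYPE('x::metric_space)"
    and A: "continuous_action mul e (act :: 'g \<Rightarrow> 'x \<Rightarrow> 'x)"
    and \<mu>: "prob_space \<mu>" "sets \<mu> = sets borel"
    and lyap: "lyapunov act \<mu> V \<alpha> \<beta>" and a: "max \<alpha> 0 \<le> a" "a < 1" and "0 < R"
  shows "1 - measure (walk_distr mul e act \<mu> n x) (V -` {0..R}) \<le> (a ^ n * V x + \<beta> / (1 - a)) / R"
proof (rule walk_distr_sublevel_escape_le)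
  show "(\<lambda>(g, x). act g x) \<in> borel_measurable (borel \<Otimes>\<^sub>M borel)"
    using assms(1,2) A unfolding continuous_action_def
    by (intro continuous_on_sigma_compact_pair_measurable) auto
  show "V \<in> borel_measurable borel"
    using lyap unfolding lyapunov_def by (intro borel_measurable_continuous_onI) auto
  show "\<And>x. (\<integral>\<^sup>+ g. ennreal (V (act g x)) \<partial>\<mu>) \<le> ennreal (a * V x + \<beta>)"
    using lyapunov_nn_integral_le[OF lyap a(1)] .
qed (use A \<mu> lyap a \<open>0 < R\<close> in \<open>auto simp: continuous_action_def lyapunov_def\<close>)

lemma lyapunov_recurrent_uniform_n0:
  fixes act :: "'g::metric_space \<Rightarrow> 'x::metric_space \<Rightarrow> 'x"
  assumes "sigma_compact_type TYPE('g)" "sigma_compact_type TYPE('x)"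
    and A: "continuous_action mul e act" and \<mu>: "prob_space \<mu>" "sets \<mu> = sets borel"
    and lyap: "lyapunov act \<mu> V \<alpha> \<beta>" and \<phi>: "\<And>n. 1 \<le> \<phi> n"
    and growth: "lyap_exp \<phi> < (if \<alpha> \<le> 0 then \<infinity> else ereal (ln (1 / \<alpha>)))"
  shows "\<exists>n0. \<forall>\<epsilon>>0. \<exists>M. compact M \<and>
           (\<forall>n\<ge>n0. \<forall>x\<in>V -` {0..\<phi> n}. measure (walk_distr mul e act \<mu> n x) M \<ge> 1 - \<epsilon>)"
proof -
  define a where "a = max \<alpha> 0"
  have V: "\<And>R. compact (V -` {0..R})" and a: "0 \<le> a" "a < 1" "0 \<le> \<beta> / (1 - a)"
    using lyapunov_sublevel_compact[OF lyap] lyapunov_constants[OF lyap] by (auto simp: a_def)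
  have "lyap_exp \<phi> < (if a \<le> 0 then \<infinity> else ereal (ln (1 / a)))"
    using growth by (cases "\<alpha> \<le> 0") (auto simp: a_def max_def)
  moreover have "\<And>n. 0 < \<phi> n" using \<phi> by (rule less_le_trans[OF zero_less_one])
  ultimately obtain n0 where n0: "\<And>n. n0 \<le> n \<Longrightarrow> a ^ n * \<phi> n \<le> 1"
    using lyap_exp_less_imp_pow_mult_le_one[OF a(1)] by blast
  have tail: "\<And>n x R. 0 < R \<Longrightarrow>
      1 - measure (walk_distr mul e act \<mu> n x) (V -` {0..R}) \<le> (a ^ n * V x + \<beta> / (1 - a)) / R"
    using lyapunov_walk_escape_le[OF assms(1,2) A \<mu> lyap _ a(2)] by (simp add: a_def)
  show ?thesis
  proof (intro exI[of _ n0] allI impI)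
    fix \<epsilon> :: real assume "0 < \<epsilon>"
    show "\<exists>M. compact M \<and> (\<forall>n\<ge>n0. \<forall>x\<in>V -` {0..\<phi> n}. measure (walk_distr mul e act \<mu> n x) M \<ge> 1 - \<epsilon>)"
      using V sublevel_mass_ge_uniform[OF tail a(1,3) n0 _ \<open>0 < \<epsilon>\<close>]
      by (intro exI[of _ "V -` {0..(1 + \<beta> / (1 - a)) / \<epsilon>}"]) auto
  qed
qed

lemma lyapunov_unif_recurrent_avg:
  fixes act :: "'g::metric_space \<Rightarrow> 'x::metric_space \<Rightarrow> 'x"
  assumes "sigma_compact_type TYPE('g)" "sigma_compact_type TYPE('x)"
    and A: "continuous_action mul e act" and \<mu>: "prob_space \<mu>" "sets \<mu> = sets borel"
    and lyap: "lyapunov act \<mu> V \<alpha> \<beta>" and \<phi>: "\<And>n. 1 \<le> \<phi> n" and "lyap_exp \<phi> = 0"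
  shows "unif_recurrent_avg mul e act \<mu> (\<lambda>n. V -` {0..\<phi> n})"
  unfolding unif_recurrent_avg_def
proof (intro allI impI)
  fix \<epsilon> :: real assume "0 < \<epsilon>"
  define a where "a = max \<alpha> (1 / 2)"
  have V: "\<And>R. compact (V -` {0..R})" "\<And>x. 0 \<le> V x"
    and a: "max \<alpha> 0 \<le> a" "0 < a" "a < 1" "0 \<le> \<beta> / (1 - a)"
    using lyapunov_sublevel_compact[OF lyap] lyapunov_constants[OF lyap] by (auto simp: a_def)
  obtain n0 R where avg: "\<And>n x. n0 \<le> n \<Longrightarrow> V x \<le> \<phi> n \<Longrightarrow>
      1 - \<epsilon> \<le> 1 / real n * (\<Sum>k<n. measure (walk_distr mul e act \<mu> k x) (V -` {0..R}))"
    using sublevel_mass_average_ge[OF lyapunov_walk_escape_le[OF assms(1,2) A \<mu> lyap a(1,3)]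
        a(2,3,4) V(2) \<phi> \<open>lyap_exp \<phi> = 0\<close> \<open>0 < \<epsilon>\<close>]
    by blast
  then show "\<exists>n0 M. compact M \<and> (\<forall>n\<ge>n0. \<forall>x\<in>V -` {0..\<phi> n}.
      1 - \<epsilon> \<le> 1 / real n * (\<Sum>k<n. measure (walk_distr mul e act \<mu> k x) M))"
    using V(1) by (intro exI[of _ n0] exI[of _ "V -` {0..R}"]) auto
qed

theorem proposition4p12:
  fixes mul :: "'g::metric_space \<Rightarrow> 'g \<Rightarrow> 'g" and e :: 'g and ginv :: "'g \<Rightarrow> 'g"
    and act :: "'g \<Rightarrow> 'x::metric_space \<Rightarrow> 'x" and mX :: "'x measure"
    and \<mu> :: "'g measure" and V :: "'x \<Rightarrow> real" and \<alpha> \<beta> :: real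
    and \<phi> :: "nat \<Rightarrow> real" and K :: "nat \<Rightarrow> 'x set"
  assumes G: "lcsc_group mul e ginv"
    and X: "lcsc_space TYPE('x)"
    and A: "continuous_action mul e act"
    and erg: "ergodic_invariant_prob act mX"
    and mu: "prob_space \<mu>" "sets \<mu> = sets borel"
    and phi: "\<And>n. 1 \<le> \<phi> n"
    and lyap: "lyapunov act \<mu> V \<alpha> \<beta>"
    and K_def: "\<And>n. K n = V -` {0..\<phi> n}"
  shows "(lyap_exp \<phi> < (if \<alpha> \<le> 0 then \<infinity> else ereal (ln (1 / \<alpha>))) \<longrightarrow>
           unif_recurrent mul e act \<mu> K \<and>
           (\<exists>n0. \<forall>\<epsilon>>0. \<exists>M. compact M \<and>
              (\<forall>n\<ge>n0. \<forall>x\<in>K n. measure (walk_distr mul e act \<mu> n x) M \<ge> 1 - \<epsilon>)))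
       \<and> (lyap_exp \<phi> = 0 \<longrightarrow> unif_recurrent_avg mul e act \<mu> K)"
proof -
  have sc: "sigma_compact_type TYPE('g)" "sigma_compact_type TYPE('x)"
    using G X by (simp_all add: lcsc_group_def lcsc_space_def)
  have K: "K = (\<lambda>n. V -` {0..\<phi> n})" using K_def by (intro ext)
  show ?thesis
    unfolding K
  proof (intro conjI impI)
    assume "lyap_exp \<phi> < (if \<alpha> \<le> 0 then \<infinity> else ereal (ln (1 / \<alpha>)))"
    then show "\<exists>n0. \<forall>\<epsilon>>0. \<exists>M. compact M \<and> (\<forall>n\<ge>n0. \<forall>x\<in>V -` {0..\<phi> n}.
        1 - \<epsilon> \<le> measure (walk_distr mul e act \<mu> n x) M)"
      by (rule lyapunov_recurrent_uniform_n0[OF sc A mu lyap phi])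
    then show "unif_recurrent mul e act \<mu> (\<lambda>n. V -` {0..\<phi> n})"
      unfolding unif_recurrent_def by blast
  qed (rule lyapunov_unif_recurrent_avg[OF sc A mu lyap phi])
qed

end
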